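(* Let $H$ be an inner product space over $\mathbb{K}\in\{\mathbb{R},\mathbb{C}\}$. Let $x,y\in H$ with $x\ne0$, $y\neq 0$, and let $a,b\in\mathbb{K}$ satisfy $$\operatorname{Re}\langle x-ay,\ by-x\rangle\ge 0 .$$ (a) If $\operatorname{Re}(a\bar b)>0$, then $$\|x\|^2\|y\|^2\le \frac14\,\frac{\big(\operatorname{Re}[(\bar a+\bar b)\langle x,y\rangle]\big)^2}{\operatorname{Re}(a\bar b)}\le \frac14\,\frac{|a+b|^2}{\operatorname{Re}(a\bar b)}\,|\langle x,y\rangle|^2 .$$ The constant $\tfrac14$ is best possible in both inequalities. That is, for every $l\in(0,\tfrac14)$ there exist $H$, nonzero $x,y\in H$ and $a,b\in\mathbb{K}$ with $\operatorname{Re}\langle x-ay,by-x\rangle\ge0$ and $\operatorname{Re}(a\bar b)>0$ for which $\|x\|^2\|y\|^2> l\,\frac{(\operatorname{Re}[(\bar a+\bar b)\langle x,y\rangle])^2}{\operatorname{Re}(a\bar b)}$. Likewise there exist such data for which $\|x\|^2\|y\|^2> l\,\frac{|a+b|^2}{\operatorname{Re}(a\bar b)}|\langle x,y\rangle|^2$. (b) If $\operatorname{Re}(a\bar b)=0$, then $$\|x\|^2\le \operatorname{Re}[(\bar a+\bar b)\langle x,y\rangle]\le |a+b|\,|\langle x,y\rangle| .$$ (c) If $\operatorname{Re}(a\bar b)<0$, then $$\|x\|^2\le \operatorname{Re}[(\bar a+\bar b)\langle x,y\rangle]-\operatorname{Re}(a\bar b)\|y\|^2\le |a+b|\,|\langle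 x,y\rangle|-\operatorname{Re}(a\bar b)\|y\|^2 .$$
   Context: The inner product $\langle\cdot,\cdot\rangle$ is linear in the first argument and conjugate-linear in the second. $\|u\|=\sqrt{\langle u,u\rangle}$ is the induced norm, and $\bar a$ denotes the complex conjugate of $a$ (equal to $a$ when $\mathbb{K}=\mathbb{R}$). *)

theory Defs
  imports "HOL-Analysis.Analysis"
begin

text \<open>Complex inner product spaces are not in the distribution library, so we
define them: an abelian group with a complex scalar multiplication satisfying
the vector-space axioms, and an inner product linear in the first argument and
conjugate-linear (via conjugate symmetry) in the second, positive definite.\<close>

class complex_inner_space = ab_group_add +
  fixes scaleC :: "complex \<Rightarrow> 'a \<Rightarrow> 'a" (infixr \<open>*\<^sub>C\<close> 75)
    and cinner :: "'a \<Rightarrow> 'a \<Rightarrow> complex"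
  assumes scaleC_add_right: "a *\<^sub>C (x + y) = a *\<^sub>C x + a *\<^sub>C y"
    and scaleC_add_left: "(a + b) *\<^sub>C x = a *\<^sub>C x + b *\<^sub>C x"
    and scaleC_scaleC: "a *\<^sub>C (b *\<^sub>C x) = (a * b) *\<^sub>C x"
    and scaleC_one: "1 *\<^sub>C x = x"
    and cinner_add_left: "cinner (x + y) z = cinner x z + cinner y z"
    and cinner_scaleC_left: "cinner (a *\<^sub>C x) y = a * cinner x y"
    and cinner_commute: "cinner x y = cnj (cinner y x)"
    and cinner_self_nonneg: "Im (cinner x x) = 0 \<and> 0 \<le> Re (cinner x x)"
    and cinner_self_eq_zero: "cinner x x = 0 \<longleftrightarrow> x = 0"

definition cnorm :: "'a::complex_inner_space \<Rightarrow> real" where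
  "cnorm x = sqrt (Re (cinner x x))"

end

theory Submission
  imports Defs
begin

text \<open>Expanding the hypothesis gives \<open>\<parallel>x\<parallel>\<^sup>2 + Re(a b\<^sup>*) \<parallel>y\<parallel>\<^sup>2 \<le> S\<close>, where
  \<open>S = Re[(a\<^sup>* + b\<^sup>*)\<langle>x,y\<rangle>]\<close> satisfies \<open>|S| \<le> |a + b| |\<langle>x,y\<rangle>|\<close>. Cases (b) and (c)
  are then immediate, and for (a) AM-GM gives
  \<open>4 Re(a b\<^sup>*) \<parallel>x\<parallel>\<^sup>2\<parallel>y\<parallel>\<^sup>2 \<le> (\<parallel>x\<parallel>\<^sup>2 + Re(a b\<^sup>*) \<parallel>y\<parallel>\<^sup>2)\<^sup>2 \<le> S\<^sup>2\<close>.
  Equality holds for \<open>x = y\<close>, \<open>a = b = 1\<close>, so \<open>1/4\<close> is sharp.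
  What remains after the expansion concerns only the reals \<open>\<parallel>x\<parallel>\<^sup>2\<close>, \<open>\<parallel>y\<parallel>\<^sup>2\<close>, \<open>S\<close>,
  so it is shared by both fields.\<close>

lemma mult_le_quarter_sq_div_of_add_le:
  fixes u v p s :: real
  assumes "0 \<le> u" "0 \<le> v" "0 < p" "u + p * v \<le> s"
  shows "u * v \<le> 1/4 * s\<^sup>2 / p"
proof -
  have "4 * p * (u * v) \<le> (u + p * v)\<^sup>2"
    using sum_squares_ge_zero[of "u - p * v" 0] by (simp add: power2_eq_square algebra_simps)
  also have "\<dots> \<le> s\<^sup>2"
    using assms by (intro power_mono) auto
  finally show ?thesis
    using \<open>0 < p\<close> by (simp add: field_simps)
qed

lemma reverse_schwarz_cases:
  fixes u v p s A B :: real
  assumes "0 \<le> u" "0 \<le> v" "u + p * v \<le> s" "\<bar>s\<bar> \<le> A * B"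
  shows "(p > 0 \<longrightarrow> u * v \<le> 1/4 * s\<^sup>2 / p \<and> 1/4 * s\<^sup>2 / p \<le> 1/4 * A\<^sup>2 / p * B\<^sup>2) \<and>
    (p = 0 \<longrightarrow> u \<le> s \<and> s \<le> A * B) \<and>
    (p < 0 \<longrightarrow> u \<le> s - p * v \<and> s - p * v \<le> A * B - p * v)"
proof (intro conjI impI)
  assume "p > 0"
  then show "u * v \<le> 1/4 * s\<^sup>2 / p"
    using assms by (intro mult_le_quarter_sq_div_of_add_le) auto
  have "s\<^sup>2 \<le> (A * B)\<^sup>2"
    using assms(4) by (metis abs_ge_zero order_trans power2_abs power_mono)
  then show "1/4 * s\<^sup>2 / p \<le> 1/4 * A\<^sup>2 / p * B\<^sup>2"
    using \<open>p > 0\<close> by (simp add: divide_right_mono power_mult_distrib)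
qed (use assms in auto)

lemma inner_diff_scaleR_expand:
  fixes x y :: "'a::real_inner"
  shows "(x - a *\<^sub>R y) \<bullet> (b *\<^sub>R y - x) = (a + b) * (x \<bullet> y) - norm x ^ 2 - a * b * norm y ^ 2"
  by (simp add: inner_diff_left inner_diff_right inner_commute[of y x] power2_norm_eq_inner
      algebra_simps)

lemma cinner_zero_left [simp]: "cinner 0 y = 0"
  using cinner_add_left[of 0 0 y] by simp

lemma cinner_minus_left: "cinner (- x) y = - cinner x y"
  using cinner_add_left[of x "- x" y] by (metis add.right_inverse cinner_zero_left neg_eq_iff_add_eq_0)

lemma cinner_diff_left: "cinner (x - z) y = cinner x y - cinner z y"
  by (simp only: diff_conv_add_uminus cinner_add_left cinner_minus_left)

lemma cinner_diff_right: "cinner y (x - z) = cinner y x - cinner y z"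
  by (metis cinner_commute cinner_diff_left complex_cnj_diff)

lemma cinner_scaleC_right: "cinner x (a *\<^sub>C y) = cnj a * cinner x y"
  by (metis cinner_commute cinner_scaleC_left complex_cnj_mult)

lemma cinner_self_eq_cnorm: "cinner x x = complex_of_real (cnorm x ^ 2)"
  using cinner_self_nonneg[of x] by (simp add: cnorm_def complex_eq_iff)

lemma cnorm_eq_zero [simp]: "cnorm x = 0 \<longleftrightarrow> x = 0"
  using cinner_self_nonneg[of x] cinner_self_eq_zero[of x] by (auto simp: cnorm_def complex_eq_iff)

lemma Re_cinner_diff_scaleC_expand:
  "Re (cinner (x - a *\<^sub>C y) (b *\<^sub>C y - x)) =
    Re ((cnj a + cnj b) * cinner x y) - cnorm x ^ 2 - Re (a * cnj b) * cnorm y ^ 2"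
proof -
  have "cinner (x - a *\<^sub>C y) (b *\<^sub>C y - x) =
      a * cnj (cinner x y) + cnj b * cinner x y - cinner x x - a * cnj b * cinner y y"
    by (simp add: cinner_diff_left cinner_diff_right cinner_scaleC_left cinner_scaleC_right
        cinner_commute[of y x] algebra_simps)
  then show ?thesis
    by (simp only:) (simp add: cinner_self_eq_cnorm algebra_simps del: of_real_power)
qed

lemma abs_Re_cnj_add_mult_le: "\<bar>Re ((cnj a + cnj b) * z)\<bar> \<le> cmod (a + b) * cmod z"
  by (metis abs_Re_le_cmod complex_cnj_add complex_mod_cnj norm_mult)

theorem theorem2:
  shows
  \<comment> \<open>Case K = R\<close>
  "(\<forall>(x::'r::real_inner) y (a::real) b.
      x \<noteq> 0 \<and> y \<noteq> 0 \<and> (x - a *\<^sub>R y) \<bullet> (b *\<^sub>R y - x) \<ge> 0 \<longrightarrow>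
        (a * b > 0 \<longrightarrow>
           norm x ^ 2 * norm y ^ 2 \<le> 1/4 * ((a + b) * (x \<bullet> y))^2 / (a * b) \<and>
           1/4 * ((a + b) * (x \<bullet> y))^2 / (a * b) \<le> 1/4 * \<bar>a + b\<bar>^2 / (a * b) * \<bar>x \<bullet> y\<bar>^2) \<and>
        (a * b = 0 \<longrightarrow>
           norm x ^ 2 \<le> (a + b) * (x \<bullet> y) \<and>
           (a + b) * (x \<bullet> y) \<le> \<bar>a + b\<bar> * \<bar>x \<bullet> y\<bar>) \<and>
        (a * b < 0 \<longrightarrow>
           norm x ^ 2 \<le> (a + b) * (x \<bullet> y) - a * b * norm y ^ 2 \<and>
           (a + b) * (x \<bullet> y) - a * b * norm y ^ 2 \<le> \<bar>a + b\<bar> * \<bar>x \<bullet> y\<bar> - a * b * norm y ^ 2))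
   \<and> ((\<exists>v::'r. v \<noteq> 0) \<longrightarrow>
      (\<forall>l::real. 0 < l \<and> l < 1/4 \<longrightarrow>
        (\<exists>(x::'r) y (a::real) b. x \<noteq> 0 \<and> y \<noteq> 0 \<and> (x - a *\<^sub>R y) \<bullet> (b *\<^sub>R y - x) \<ge> 0 \<and>
           a * b > 0 \<and> norm x ^ 2 * norm y ^ 2 > l * ((a + b) * (x \<bullet> y))^2 / (a * b)) \<and>
        (\<exists>(x::'r) y (a::real) b. x \<noteq> 0 \<and> y \<noteq> 0 \<and> (x - a *\<^sub>R y) \<bullet> (b *\<^sub>R y - x) \<ge> 0 \<and>
           a * b > 0 \<and> norm x ^ 2 * norm y ^ 2 > l * \<bar>a + b\<bar>^2 / (a * b) * \<bar>x \<bullet> y\<bar>^2)))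
   \<and>
  \<comment> \<open>Case K = C\<close>
   (\<forall>(x::'c::complex_inner_space) y (a::complex) b.
      x \<noteq> 0 \<and> y \<noteq> 0 \<and> Re (cinner (x - a *\<^sub>C y) (b *\<^sub>C y - x)) \<ge> 0 \<longrightarrow>
        (Re (a * cnj b) > 0 \<longrightarrow>
           cnorm x ^ 2 * cnorm y ^ 2 \<le> 1/4 * (Re ((cnj a + cnj b) * cinner x y))^2 / Re (a * cnj b) \<and>
           1/4 * (Re ((cnj a + cnj b) * cinner x y))^2 / Re (a * cnj b)
             \<le> 1/4 * (cmod (a + b))^2 / Re (a * cnj b) * (cmod (cinner x y))^2) \<and>
        (Re (a * cnj b) = 0 \<longrightarrow>
           cnorm x ^ 2 \<le> Re ((cnj a + cnj b) * cinner x y) \<and>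
           Re ((cnj a + cnj b) * cinner x y) \<le> cmod (a + b) * cmod (cinner x y)) \<and>
        (Re (a * cnj b) < 0 \<longrightarrow>
           cnorm x ^ 2 \<le> Re ((cnj a + cnj b) * cinner x y) - Re (a * cnj b) * cnorm y ^ 2 \<and>
           Re ((cnj a + cnj b) * cinner x y) - Re (a * cnj b) * cnorm y ^ 2
             \<le> cmod (a + b) * cmod (cinner x y) - Re (a * cnj b) * cnorm y ^ 2))
   \<and> ((\<exists>v::'c. v \<noteq> 0) \<longrightarrow>
      (\<forall>l::real. 0 < l \<and> l < 1/4 \<longrightarrow>
        (\<exists>(x::'c) y (a::complex) b. x \<noteq> 0 \<and> y \<noteq> 0 \<and>
           Re (cinner (x - a *\<^sub>C y) (b *\<^sub>C y - x)) \<ge> 0 \<and> Re (a * cnj b) > 0 \<and>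
           cnorm x ^ 2 * cnorm y ^ 2 > l * (Re ((cnj a + cnj b) * cinner x y))^2 / Re (a * cnj b)) \<and>
        (\<exists>(x::'c) y (a::complex) b. x \<noteq> 0 \<and> y \<noteq> 0 \<and>
           Re (cinner (x - a *\<^sub>C y) (b *\<^sub>C y - x)) \<ge> 0 \<and> Re (a * cnj b) > 0 \<and>
           cnorm x ^ 2 * cnorm y ^ 2 > l * (cmod (a + b))^2 / Re (a * cnj b) * (cmod (cinner x y))^2)))"
  apply (intro conjI)
  subgoal
    by (intro allI impI reverse_schwarz_cases) (auto simp: inner_diff_scaleR_expand abs_mult)
  subgoal
    by (clarify, intro conjI exI[of _ 1] exI)
      (auto simp: power2_norm_eq_inner[symmetric] mult_less_cancel_right2)
  subgoal
    by (intro allI impI reverse_schwarz_cases abs_Re_cnj_add_mult_le)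
      (auto simp: Re_cinner_diff_scaleC_expand)
  subgoal
    by (clarify, intro conjI exI[of _ 1] exI)
      (auto simp: cinner_self_eq_cnorm scaleC_one norm_power mult_less_cancel_right2)
  done

end
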